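(* Let $G$ be a connected graph with at least $3$ vertices such that $D(G)$ is an infinite cardinal. Then $D'(G)\le D(G)$.
   Context: Graphs are simple and may be infinite. A colouring (of vertices or edges) is distinguishing if the identity is the only automorphism of $G$ preserving it, where $\gamma$ preserves a vertex colouring $c$ if $c\circ\gamma=c$ and an edge colouring $d$ if $d(\gamma(u)\gamma(v))=d(uv)$ for all edges $uv$. $D(G)$ is the least number (cardinal) of colours in a distinguishing vertex colouring, and $D'(G)$ the least number of colours in a distinguishing edge colouring. *)

theory Defs
  imports Main
begin

definition simple_graph :: "'a set \<Rightarrow> 'a set set \<Rightarrow> bool" where
  "simple_graph V E \<longleftrightarrow> (\<forall>e\<in>E. \<exists>u v. u \<in> V \<and> v \<in> V \<and> u \<noteq> v \<and> e = {u, v})"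

definition connected_graph :: "'a set \<Rightarrow> 'a set set \<Rightarrow> bool" where
  "connected_graph V E \<longleftrightarrow>
     (\<forall>u\<in>V. \<forall>v\<in>V. (u, v) \<in> {(x, y). {x, y} \<in> E}\<^sup>*)"

definition automorphism :: "'a set \<Rightarrow> 'a set set \<Rightarrow> ('a \<Rightarrow> 'a) \<Rightarrow> bool" where
  "automorphism V E g \<longleftrightarrow> bij_betw g V V \<and>
     (\<forall>u\<in>V. \<forall>v\<in>V. {u, v} \<in> E \<longleftrightarrow> {g u, g v} \<in> E)"

definition distinguishing_vertex_colouring ::
  "'a set \<Rightarrow> 'a set set \<Rightarrow> ('a \<Rightarrow> 'c) \<Rightarrow> 'c set \<Rightarrow> bool" where
  "distinguishing_vertex_colouring V E c C \<longleftrightarrow> c ` V \<subseteq> C \<and>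
     (\<forall>g. automorphism V E g \<and> (\<forall>v\<in>V. c (g v) = c v) \<longrightarrow> (\<forall>v\<in>V. g v = v))"

definition distinguishing_edge_colouring ::
  "'a set \<Rightarrow> 'a set set \<Rightarrow> ('a set \<Rightarrow> 'c) \<Rightarrow> 'c set \<Rightarrow> bool" where
  "distinguishing_edge_colouring V E d C \<longleftrightarrow> d ` E \<subseteq> C \<and>
     (\<forall>g. automorphism V E g \<and> (\<forall>u\<in>V. \<forall>v\<in>V. {u, v} \<in> E \<longrightarrow> d {g u, g v} = d {u, v})
        \<longrightarrow> (\<forall>v\<in>V. g v = v))"

end

theory Submission
  imports Defs
begin

text \<open>Since D(G) is infinite, the colour set C is infinite and C \<times> C is in bijection with C.
  Fix a vertex r with two distinct neighbours and give each edge the pair consisting of the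
  colour of its endpoint farther from r and a tag telling whether the edge is incident with r.
  An automorphism preserving this edge colouring maps the edges at r among themselves, so it
  fixes r (if g r \<noteq> r, the images of the edges rp and rq still contain r, forcing
  g p = r = g q for the two neighbours p \<noteq> q of r), hence it preserves
  distances from r and therefore the colour of every vertex: every v \<noteq> r is the far endpoint of
  an edge to a neighbour closer to r. As the vertex colouring is distinguishing, g is the
  identity.\<close>

abbreviation adjacency :: "'a set set \<Rightarrow> ('a \<times> 'a) set" where
  "adjacency E \<equiv> {(x, y). {x, y} \<in> E}"

lemma simple_graph_edgeD:
  assumes "simple_graph V E" "{x, y} \<in> E"
  shows "x \<in> V" "y \<in> V" "x \<noteq> y"
  using assms unfolding simple_graph_def by (auto simp: doubleton_eq_iff)

lemma automorphism_edgeD: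
  assumes "automorphism V E g" "u \<in> V" "v \<in> V" "{u, v} \<in> E"
  shows "{g u, g v} \<in> E"
  using assms unfolding automorphism_def by blast

lemma automorphism_inv_into:
  assumes aut: "automorphism V E g"
  shows "automorphism V E (inv_into V g)"
proof -
  have g: "bij_betw g V V" using aut unfolding automorphism_def by simp
  have h: "bij_betw (inv_into V g) V V" using bij_betw_inv_into[OF g] .
  have "{u, v} \<in> E \<longleftrightarrow> {inv_into V g u, inv_into V g v} \<in> E" if "u \<in> V" "v \<in> V" for u v
  proof -
    have "inv_into V g u \<in> V" "inv_into V g v \<in> V" using h that bij_betwE by blast+
    moreover have "g (inv_into V g u) = u" "g (inv_into V g v) = v"
      using that g by (auto simp: bij_betw_def f_inv_into_f)
    ultimately show ?thesis using aut unfolding automorphism_def by metis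
  qed
  with h show ?thesis unfolding automorphism_def by blast
qed

lemma automorphism_relpow_adjacency:
  assumes sg: "simple_graph V E" and aut: "automorphism V E g" and "r \<in> V" "g r = r"
  shows "(r, v) \<in> adjacency E ^^ n \<Longrightarrow> (r, g v) \<in> adjacency E ^^ n"
proof (induction n arbitrary: v)
  case 0
  then show ?case using assms by simp
next
  case (Suc n)
  then obtain y where y: "(r, y) \<in> adjacency E ^^ n" "{y, v} \<in> E" by auto
  have "{g y, g v} \<in> E"
    using automorphism_edgeD[OF aut _ _ y(2)] simple_graph_edgeD[OF sg y(2)] by blast
  with Suc.IH[OF y(1)] show ?case by auto
qed

lemma automorphism_relpow_adjacency_iff:
  assumes sg: "simple_graph V E" and aut: "automorphism V E g"
    and r: "r \<in> V" "g r = r" and v: "v \<in> V"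
  shows "(r, g v) \<in> adjacency E ^^ n \<longleftrightarrow> (r, v) \<in> adjacency E ^^ n"
proof
  have g: "bij_betw g V V" using aut unfolding automorphism_def by simp
  have "inv_into V g r = r" "inv_into V g (g v) = v"
    using g r v by (metis bij_betw_def inv_into_f_f)+
  then show "(r, v) \<in> adjacency E ^^ n" if "(r, g v) \<in> adjacency E ^^ n"
    using automorphism_relpow_adjacency[OF sg automorphism_inv_into[OF aut] r(1) _ that] by simp
qed (rule automorphism_relpow_adjacency[OF sg aut r])

definition dist_from :: "'a set set \<Rightarrow> 'a \<Rightarrow> 'a \<Rightarrow> nat" where
  "dist_from E r v = (LEAST n. (r, v) \<in> adjacency E ^^ n)"

lemma automorphism_dist_from:
  assumes "simple_graph V E" "automorphism V E g" "r \<in> V" "g r = r" "v \<in> V"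
  shows "dist_from E r (g v) = dist_from E r v"
  unfolding dist_from_def using automorphism_relpow_adjacency_iff[OF assms] by simp

lemma connected_graph_closer_neighbour:
  assumes "connected_graph V E" "r \<in> V" "v \<in> V" "v \<noteq> r"
  obtains u where "{u, v} \<in> E" "dist_from E r u < dist_from E r v"
proof -
  have "(r, v) \<in> (adjacency E)\<^sup>*" using assms unfolding connected_graph_def by blast
  then obtain n where "(r, v) \<in> adjacency E ^^ n" using rtrancl_power by blast
  then have rv: "(r, v) \<in> adjacency E ^^ dist_from E r v" unfolding dist_from_def by (rule LeastI)
  then obtain m where m: "dist_from E r v = Suc m" using \<open>v \<noteq> r\<close> by (cases "dist_from E r v") auto
  then obtain u where u: "(r, u) \<in> adjacency E ^^ m" "{u, v} \<in> E" using rv by auto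
  have "dist_from E r u \<le> m" unfolding dist_from_def using u(1) by (rule Least_le)
  with m u(2) that show ?thesis by simp
qed

lemma connected_graph_vertex_with_two_neighbours:
  assumes sg: "simple_graph V E" and conn: "connected_graph V E"
    and three: "infinite V \<or> card V \<ge> 3"
  obtains r p q where "r \<in> V" "{r, p} \<in> E" "{r, q} \<in> E" "p \<noteq> q"
proof (rule ccontr)
  assume "\<not> thesis"
  then have deg: "\<And>z u w. z \<in> V \<Longrightarrow> {z, u} \<in> E \<Longrightarrow> {z, w} \<in> E \<Longrightarrow> u = w"
    using that by blast
  obtain S where "S \<subseteq> V" "card S = 3"
    using three by (metis infinite_arbitrarily_large obtain_subset_with_card_n)
  then obtain x1 x2 x3 where x: "x1 \<in> V" "x2 \<in> V" "x3 \<in> V" "x1 \<noteq> x2" "x1 \<noteq> x3" "x2 \<noteq> x3"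
    by (auto simp: card_3_iff)
  have star: "z = x1 \<or> {x1, z} \<in> E" if "(x1, z) \<in> (adjacency E)\<^sup>*" for z
    using that
  proof (induction rule: rtrancl_induct)
    case (step y z)
    then have yz: "{y, z} \<in> E" by simp
    show ?case
    proof (cases "y = x1")
      case False
      then have "{y, x1} \<in> E" using step by (simp add: insert_commute)
      then show ?thesis using deg[of y x1 z] yz simple_graph_edgeD[OF sg yz] by blast
    qed (use yz in simp)
  qed simp
  have "x2 = x1 \<or> {x1, x2} \<in> E" "x3 = x1 \<or> {x1, x3} \<in> E"
    using star conn x unfolding connected_graph_def by blast+
  then show False using deg[of x1 x2 x3] x by auto
qed

definition far_endpoint :: "'a set set \<Rightarrow> 'a \<Rightarrow> 'a set \<Rightarrow> 'a" where
  "far_endpoint E r e = (SOME x. x \<in> e \<and> (\<forall>y\<in>e. dist_from E r y \<le> dist_from E r x))"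

lemma far_endpoint_mem: "far_endpoint E r {u, v} \<in> {u, v}"
proof -
  have "\<exists>x. x \<in> {u, v} \<and> (\<forall>y\<in>{u, v}. dist_from E r y \<le> dist_from E r x)"
    by (cases "dist_from E r u \<le> dist_from E r v") auto
  then show ?thesis unfolding far_endpoint_def by (rule someI2_ex) blast
qed

lemma far_endpoint_eq:
  assumes "dist_from E r u < dist_from E r v"
  shows "far_endpoint E r {u, v} = v"
  unfolding far_endpoint_def using assms by (intro some_equality) auto

lemma far_endpoint_colour_mem:
  assumes "simple_graph V E" "c ` V \<subseteq> C" "e \<in> E"
  shows "c (far_endpoint E r e) \<in> C"
proof -
  obtain u v where "u \<in> V" "v \<in> V" "e = {u, v}"
    using assms(1,3) unfolding simple_graph_def by blast
  then show ?thesis using far_endpoint_mem[of E r u v] assms(2) by auto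
qed

definition lifted_edge_colouring ::
  "('c \<times> 'c \<Rightarrow> 'c) \<Rightarrow> 'c \<Rightarrow> 'c \<Rightarrow> 'a set set \<Rightarrow> 'a \<Rightarrow> ('a \<Rightarrow> 'c) \<Rightarrow> 'a set \<Rightarrow> 'c" where
  "lifted_edge_colouring f a b E r c e = f (c (far_endpoint E r e), if r \<in> e then a else b)"

context
  fixes V :: "'a set" and E :: "'a set set" and C :: "'c set"
    and c :: "'a \<Rightarrow> 'c" and f :: "'c \<times> 'c \<Rightarrow> 'c" and a b :: 'c and r p q :: 'a
  assumes sg: "simple_graph V E" and conn: "connected_graph V E"
    and cV: "c ` V \<subseteq> C"
    and f: "inj_on f (C \<times> C)" "f ` (C \<times> C) \<subseteq> C"
    and ab: "a \<in> C" "b \<in> C" "a \<noteq> b"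
    and rpq: "r \<in> V" "{r, p} \<in> E" "{r, q} \<in> E" "p \<noteq> q"
begin

lemma lifted_edge_colouring_range: "lifted_edge_colouring f a b E r c ` E \<subseteq> C"
  using far_endpoint_colour_mem[OF sg cV] f(2) ab unfolding lifted_edge_colouring_def by auto

lemma lifted_edge_colouring_eqD:
  assumes "e \<in> E" "e' \<in> E"
    "lifted_edge_colouring f a b E r c e = lifted_edge_colouring f a b E r c e'"
  shows "c (far_endpoint E r e) = c (far_endpoint E r e')" "r \<in> e \<longleftrightarrow> r \<in> e'"
proof -
  have "(c (far_endpoint E r e), if r \<in> e then a else b)
      = (c (far_endpoint E r e'), if r \<in> e' then a else b)"
  proof (rule inj_onD[OF f(1)])
    show "f (c (far_endpoint E r e), if r \<in> e then a else b)
        = f (c (far_endpoint E r e'), if r \<in> e' then a else b)"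
      using assms(3) unfolding lifted_edge_colouring_def .
  qed (use assms(1,2) far_endpoint_colour_mem[OF sg cV] ab in auto)
  then show "c (far_endpoint E r e) = c (far_endpoint E r e')" "r \<in> e \<longleftrightarrow> r \<in> e'"
    using ab(3) by (auto split: if_splits)
qed

context
  fixes g :: "'a \<Rightarrow> 'a"
  assumes aut: "automorphism V E g"
    and pres: "\<forall>u\<in>V. \<forall>v\<in>V. {u, v} \<in> E \<longrightarrow>
      lifted_edge_colouring f a b E r c {g u, g v} = lifted_edge_colouring f a b E r c {u, v}"
begin

private lemma preserves_edgeD:
  assumes "{u, v} \<in> E"
  shows "c (far_endpoint E r {g u, g v}) = c (far_endpoint E r {u, v})"
    and "r \<in> {g u, g v} \<longleftrightarrow> r \<in> {u, v}"
proof -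
  have "u \<in> V" "v \<in> V" using simple_graph_edgeD[OF sg assms] by auto
  then have "{g u, g v} \<in> E"
    "lifted_edge_colouring f a b E r c {g u, g v} = lifted_edge_colouring f a b E r c {u, v}"
    using automorphism_edgeD[OF aut _ _ assms] pres assms by auto
  then show "c (far_endpoint E r {g u, g v}) = c (far_endpoint E r {u, v})"
    and "r \<in> {g u, g v} \<longleftrightarrow> r \<in> {u, v}"
    using lifted_edge_colouring_eqD[OF _ assms] by blast+
qed

lemma lifted_edge_colouring_fixes_root: "g r = r"
proof (rule ccontr)
  assume "g r \<noteq> r"
  then have "g p = r" "g q = r"
    using preserves_edgeD(2)[OF rpq(2)] preserves_edgeD(2)[OF rpq(3)] by auto
  moreover have "p \<in> V" "q \<in> V" using simple_graph_edgeD[OF sg] rpq by blast+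
  ultimately show False
    using aut rpq(4) unfolding automorphism_def bij_betw_def inj_on_def by metis
qed

lemma lifted_edge_colouring_preserves_vertex_colours:
  assumes v: "v \<in> V"
  shows "c (g v) = c v"
proof (cases "v = r")
  case False
  then obtain u where u: "{u, v} \<in> E" "dist_from E r u < dist_from E r v"
    using connected_graph_closer_neighbour[OF conn rpq(1) v] by blast
  have uV: "u \<in> V" using simple_graph_edgeD[OF sg u(1)] by simp
  have "dist_from E r (g u) < dist_from E r (g v)"
    using u(2) automorphism_dist_from[OF sg aut rpq(1) lifted_edge_colouring_fixes_root] uV v
    by simp
  then show ?thesis using preserves_edgeD(1)[OF u(1)] far_endpoint_eq u(2) by metis
qed (simp add: lifted_edge_colouring_fixes_root)

end

lemma lifted_edge_colouring_distinguishing: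
  assumes c: "distinguishing_vertex_colouring V E c C"
  shows "distinguishing_edge_colouring V E (lifted_edge_colouring f a b E r c) C"
  unfolding distinguishing_edge_colouring_def
proof (intro conjI allI impI)
  fix g assume "automorphism V E g \<and> (\<forall>u\<in>V. \<forall>v\<in>V. {u, v} \<in> E \<longrightarrow>
      lifted_edge_colouring f a b E r c {g u, g v} = lifted_edge_colouring f a b E r c {u, v})"
  then have "automorphism V E g" "\<forall>v\<in>V. c (g v) = c v"
    using lifted_edge_colouring_preserves_vertex_colours by auto
  then show "\<forall>v\<in>V. g v = v" using c unfolding distinguishing_vertex_colouring_def by blast
qed (rule lifted_edge_colouring_range)

end

theorem mainTheorem7:
  fixes V :: "'a set" and E :: "'a set set"
  assumes "simple_graph V E"
    and "connected_graph V E"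
    and "infinite V \<or> card V \<ge> 3"
    and "\<forall>(C :: 'c set) c. finite C \<longrightarrow> \<not> distinguishing_vertex_colouring V E c C"
  shows "\<forall>(C :: 'c set). (\<exists>c. distinguishing_vertex_colouring V E c C) \<longrightarrow>
           (\<exists>d. distinguishing_edge_colouring V E d C)"
proof (intro allI impI)
  fix C :: "'c set"
  assume "\<exists>c. distinguishing_vertex_colouring V E c C"
  then obtain c where c: "distinguishing_vertex_colouring V E c C" by blast
  then have cV: "c ` V \<subseteq> C" unfolding distinguishing_vertex_colouring_def by simp
  have "infinite C" using assms(4) c by blast
  then obtain f where "bij_betw f (C \<times> C) C"
    using card_of_Times_same_infinite card_of_ordIso by blast
  then have f: "inj_on f (C \<times> C)" "f ` (C \<times> C) \<subseteq> C" unfolding bij_betw_def by simp_all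
  obtain a b where ab: "a \<in> C" "b \<in> C" "a \<noteq> b"
  proof -
    obtain a where "a \<in> C" using infinite_imp_nonempty[OF \<open>infinite C\<close>] by blast
    moreover obtain b where "b \<in> C - {a}"
      using infinite_imp_nonempty[OF infinite_remove[OF \<open>infinite C\<close>]] by blast
    ultimately show thesis using that by blast
  qed
  obtain r p q where rpq: "r \<in> V" "{r, p} \<in> E" "{r, q} \<in> E" "p \<noteq> q"
    using connected_graph_vertex_with_two_neighbours[OF assms(1-3)] .
  show "\<exists>d. distinguishing_edge_colouring V E d C"
    using lifted_edge_colouring_distinguishing[OF assms(1,2) cV f ab rpq c] by blast
qed

end
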